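(* Let $R^*_n$ and $c_n$ be real random variables defined on a probability space carrying data $(W_i)_{i=1}^n$, let $\delta_n>0$, $\tilde\delta_n\ge0$, $\gamma_n\in(0,1)$, and define $$\mathcal A_n=\sup_{\epsilon\ge\delta_n}\frac1\epsilon P(|R^*_n-c_n|\le\epsilon),\qquad \mathcal A_n(W)=\sup_{\epsilon\ge\delta_n}\frac1\epsilon P(|R^*_n-c_n|\le\epsilon\mid(W_i)_{i=1}^n).$$ Suppose that with probability at least $1-\gamma_n$ we have, for all $\epsilon\ge\delta_n$, $$P(|R^*_n-c_n|\le\epsilon)\le P(|R^*_n-c_n|\le\epsilon+\tilde\delta_n\mid(W_i)_{i=1}^n)+\gamma_n.$$ Then, with probability at least $1-\gamma_n$, $$\mathcal A_n\le\mathcal A_n(W)(1+\tilde\delta_n/\delta_n)+\gamma_n/\delta_n.$$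
   Context: In the paper $R^*_n$ is a bootstrap MinMax statistic and $c_n=c_n(\bar h,\alpha)$ its conditional $(1-\alpha)$-quantile given the data; the result is stated for these quantities but uses no further structure. *)

theory Defs
  imports "HOL-Probability.Probability"
begin

definition data_algebra :: "'a measure \<Rightarrow> 'b measure \<Rightarrow> (nat \<Rightarrow> 'a \<Rightarrow> 'b) \<Rightarrow> nat \<Rightarrow> 'a measure" where
  "data_algebra M N W n =
     sigma (space M) (\<Union>i\<in>{1..n}. {W i -` A \<inter> space M | A. A \<in> sets N})"

definition cond_prob_data :: "'a measure \<Rightarrow> 'b measure \<Rightarrow> (nat \<Rightarrow> 'a \<Rightarrow> 'b) \<Rightarrow> nat \<Rightarrow> 'a set \<Rightarrow> 'a \<Rightarrow> real" where
  "cond_prob_data M N W n A = real_cond_exp M (data_algebra M N W n) (indicator A)"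

definition near_event :: "'a measure \<Rightarrow> ('a \<Rightarrow> real) \<Rightarrow> ('a \<Rightarrow> real) \<Rightarrow> real \<Rightarrow> 'a set" where
  "near_event M R c eps = {\<omega> \<in> space M. \<bar>R \<omega> - c \<omega>\<bar> \<le> eps}"

end

theory Submission
  imports Defs
begin

text \<open>On the event where the hypothesis holds, fix the data.  For every \<open>\<epsilon> \<ge> \<delta>\<close>,
  \<open>P(\<epsilon>)/\<epsilon> \<le> Q(\<epsilon> + \<delta>')/(\<epsilon> + \<delta>') \<cdot> (1 + \<delta>'/\<epsilon>) + \<gamma>/\<epsilon> \<le> A(W) (1 + \<delta>'/\<delta>) + \<gamma>/\<delta>\<close>,
  where \<open>P\<close> and \<open>Q\<close> are the unconditional and conditional probabilities of
  \<open>|R - c| \<le> \<epsilon>\<close>, and taking the supremum over \<open>\<epsilon>\<close> gives the claim.  The argument is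
  deterministic, so nothing about the conditional probability beyond the hypothesis is used.\<close>

lemma div_le_shifted_ratio_bound:
  fixes p q s e d dt g :: real
  assumes "p \<le> q + g" and "q / (e + dt) \<le> s" and "0 \<le> p"
    and "0 < d" and "d \<le> e" and "0 \<le> dt" and "0 \<le> g"
  shows "p / e \<le> s * (1 + dt / d) + g / d"
proof -
  have "0 < e" "0 < e + dt" using assms by auto
  then have "q \<le> s * (e + dt)" using assms(2) by (simp add: divide_le_eq)
  then have p_le: "p \<le> s * e + (s * dt + g)" using assms(1) by (simp add: algebra_simps)
  have slack_nonneg: "0 \<le> s * dt + g"
  proof (cases "0 \<le> s")
    case True
    then show ?thesis using assms(6,7) by simp
  next
    case False
    then have "s * e \<le> 0" using \<open>0 < e\<close> by (simp add: mult_nonpos_nonneg)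
    then show ?thesis using p_le assms(3) by linarith
  qed
  have "p / e \<le> (s * e + (s * dt + g)) / e" using p_le \<open>0 < e\<close> by (simp add: divide_right_mono)
  also have "\<dots> = s + (s * dt + g) / e" using \<open>0 < e\<close> by (simp add: field_simps)
  also have "\<dots> \<le> s + (s * dt + g) / d" using slack_nonneg assms(4,5) by (simp add: divide_left_mono)
  also have "\<dots> = s * (1 + dt / d) + g / d" using assms(4) by (simp add: field_simps)
  finally show ?thesis .
qed

lemma SUP_ratio_le_shifted_SUP_ratio:
  fixes p q :: "real \<Rightarrow> real" and d dt g :: real
  assumes "0 < d" and "0 \<le> dt" and "0 \<le> g"
    and "\<And>e. d \<le> e \<Longrightarrow> 0 \<le> p e"
    and "\<And>e. d \<le> e \<Longrightarrow> p e \<le> q (e + dt) + g"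
  shows "(SUP e \<in> {d..}. ereal (p e / e))
           \<le> (SUP e \<in> {d..}. ereal (q e / e)) * ereal (1 + dt / d) + ereal (g / d)"
proof -
  define S where "S = (SUP e \<in> {d..}. ereal (q e / e))"
  have le_S: "ereal (q e / e) \<le> S" if "d \<le> e" for e
    unfolding S_def using that by (intro SUP_upper) auto
  have "(SUP e \<in> {d..}. ereal (p e / e)) \<le> S * ereal (1 + dt / d) + ereal (g / d)"
  proof (cases S)
    case (real s)
    show ?thesis
    proof (rule SUP_least)
      fix e assume "e \<in> {d..}"
      then have "d \<le> e" by simp
      have "q (e + dt) / (e + dt) \<le> s" using le_S[of "e + dt"] \<open>d \<le> e\<close> assms(2) real by simp
      then have "p e / e \<le> s * (1 + dt / d) + g / d"
        using assms \<open>d \<le> e\<close> by (intro div_le_shifted_ratio_bound) auto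
      then show "ereal (p e / e) \<le> S * ereal (1 + dt / d) + ereal (g / d)"
        using real by simp
    qed
  next
    case PInf
    have "0 < 1 + dt / d" using assms(1,2) by (simp add: add_pos_nonneg)
    then show ?thesis using PInf by simp
  next
    case MInf
    then show ?thesis using le_S[of d] by simp
  qed
  then show ?thesis unfolding S_def .
qed

theorem theorem5p3:
  fixes M :: "'a measure" and N :: "'b measure" and W :: "nat \<Rightarrow> 'a \<Rightarrow> 'b" and n :: nat
    and R c :: "'a \<Rightarrow> real" and d dt g :: real
  assumes "prob_space M"
    and "\<And>i. i \<in> {1..n} \<Longrightarrow> W i \<in> measurable M N"
    and "R \<in> borel_measurable M" and "c \<in> borel_measurable M"
    and "d > 0" and "dt \<ge> 0" and "0 < g" and "g < 1"
    and "\<exists>E \<in> sets M. measure M E \<ge> 1 - g \<and>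
           (\<forall>w \<in> E. \<forall>e \<ge> d.
              measure M (near_event M R c e)
                \<le> cond_prob_data M N W n (near_event M R c (e + dt)) w + g)"
  shows "\<exists>E \<in> sets M. measure M E \<ge> 1 - g \<and>
           (\<forall>w \<in> E.
              (SUP e \<in> {d..}. ereal (measure M (near_event M R c e) / e))
                \<le> (SUP e \<in> {d..}. ereal (cond_prob_data M N W n (near_event M R c e) w / e))
                    * ereal (1 + dt / d) + ereal (g / d))"
proof -
  obtain E where "E \<in> sets M" and "measure M E \<ge> 1 - g"
    and hyp: "\<And>w e. w \<in> E \<Longrightarrow> d \<le> e \<Longrightarrow> measure M (near_event M R c e)
                \<le> cond_prob_data M N W n (near_event M R c (e + dt)) w + g"
    using assms(9) by blast
  moreover have "(SUP e \<in> {d..}. ereal (measure M (near_event M R c e) / e))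
                \<le> (SUP e \<in> {d..}. ereal (cond_prob_data M N W n (near_event M R c e) w / e))
                    * ereal (1 + dt / d) + ereal (g / d)" if "w \<in> E" for w
    using assms(5-7) hyp[OF that] measure_nonneg
    by (intro SUP_ratio_le_shifted_SUP_ratio) auto
  ultimately show ?thesis by blast
qed

end
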